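(* Let $N\ge 1$ and let $\mathbf{g}\in\mathbb{C}^N$ be a window such that, for every $\ell=0,1,\dots,N-1$, the DFT of the length-$N$ sequence $m\mapsto \mathbf{g}[m]\,\overline{\mathbf{g}[(m-\ell)\bmod N]}$ is non-vanishing (all its entries are nonzero). Then for every $\mathbf{x}\in\mathbb{C}^N$, the LS Algorithm described in the context, applied to the noise-free STFT magnitude $\mathbf{Y}[m,k]=|\mathbf{X}[m,k]|^2$ of $\mathbf{x}$ (with $L=1$), outputs $\hat{\mathbf{x}}=e^{i\phi}\mathbf{x}$ for some $\phi\in\mathbb{R}$, i.e. it recovers $\mathbf{x}$ up to global phase.
   Context: Signals and windows are indexed by $\{0,\dots,N-1\}$ and extended $N$-periodically. The STFT of $\mathbf{x}\in\mathbb{C}^N$ with window $\mathbf{g}$ and step $L=1$ is $\mathbf{X}[m,k]=\sum_{n=0}^{N-1}\mathbf{x}[n]\mathbf{g}[m-n]e^{-2\pi i kn/N}$ for $m,k=0,\dots,N-1$. The DFT of $\mathbf{v}\in\mathbb{C}^N$ is $(\mathbf{F}\mathbf{v})[k]=\sum_n \mathbf{v}[n]e^{-2\pi i kn/N}$; $\mathbf{F}^*$ denotes its conjugate transpose. For a matrix $\mathbf{M}\in\mathbb{C}^{N\times N}$ and $\ell\in\{0,\dots,N-1\}$, $\mathrm{diag}(\mathbf{M},\ell)\in\mathbb{C}^N$ is the vector of entries $\mathbf{M}_{i,(i+\ell)\bmod N}$, $i=0,\dots,N-1$. LS Algorithm: given $\mathbf{Y}[m,k]$, (1) compute $\mathbf{Z}[m,\ell]=\sum_{k=0}^{N-1}\mathbf{Y}[m,k]e^{-2\pi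 i k\ell/N}$ and set $\mathbf{z}_\ell=(\mathbf{Z}[m,\ell])_{m=0}^{N-1}$; (2) for each $\ell=0,\dots,N-1$ compute $\mathbf{x}_\ell=\frac1N\mathbf{F}^*\mathbf{\Sigma}_\ell^{-1}\mathbf{F}\mathbf{z}_\ell$, where $\mathbf{\Sigma}_\ell$ is the diagonal matrix whose diagonal is $\mathbf{F}\big(\mathbf{g}[n]\overline{\mathbf{g}[(n-\ell)\bmod N]}\big)_{n=0}^{N-1}$ (with the normalization of $\mathbf{F}$ chosen so that $\mathbf{F}^*\mathbf{\Sigma}_\ell\mathbf{F}$ is the circulant matrix $\mathbf{G}_\ell$ with first column $(\mathbf{g}[m]\overline{\mathbf{g}[(m-\ell)\bmod N]})_m$, i.e. $\mathbf{x}_\ell=\frac1N\mathbf{G}_\ell^{-1}\mathbf{z}_\ell$); (3) form $\mathbf{X}\in\mathbb{C}^{N\times N}$ with $\mathrm{diag}(\mathbf{X},\ell)=\mathbf{x}_\ell$ for all $\ell$; (4) output $\hat{\mathbf{x}}=\sqrt{\lambda_{\max}}\,u_{\max}$, where $\lambda_{\max}$ is the largest eigenvalue of $\mathbf{X}$ and $u_{\max}$ an associated unit eigenvector. *)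

theory Defs
  imports Complex_Main "Jordan_Normal_Form.Char_Poly"
begin

definition pidx :: "nat \<Rightarrow> int \<Rightarrow> nat" where
  "pidx N a = nat (a mod int N)"

definition per :: "complex vec \<Rightarrow> int \<Rightarrow> complex" where
  "per v a = v $ pidx (dim_vec v) a"

definition omega :: "nat \<Rightarrow> int \<Rightarrow> complex" where
  "omega N t = cis (- 2 * pi * real_of_int t / real N)"

definition DFT :: "complex vec \<Rightarrow> complex vec" where
  "DFT v = vec (dim_vec v) (\<lambda>k. \<Sum>n<dim_vec v. v $ n * omega (dim_vec v) (int k * int n))"

definition IDFT_adj :: "complex vec \<Rightarrow> complex vec" where
  "IDFT_adj w = vec (dim_vec w) (\<lambda>n. \<Sum>k<dim_vec w. w $ k * cnj (omega (dim_vec w) (int k * int n)))"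

definition STFT :: "complex vec \<Rightarrow> complex vec \<Rightarrow> complex mat" where
  "STFT g x = mat (dim_vec x) (dim_vec x)
     (\<lambda>(m,k). \<Sum>n<dim_vec x. x $ n * per g (int m - int n) * omega (dim_vec x) (int k * int n))"

definition win_prod :: "complex vec \<Rightarrow> nat \<Rightarrow> complex vec" where
  "win_prod g l = vec (dim_vec g) (\<lambda>m. g $ m * cnj (per g (int m - int l)))"

definition LS_z :: "complex mat \<Rightarrow> nat \<Rightarrow> complex vec" where
  "LS_z Y l = vec (dim_row Y) (\<lambda>m. \<Sum>k<dim_col Y. Y $$ (m,k) * omega (dim_col Y) (int k * int l))"

(* Step (2): x_l = (1/N) G_l^{-1} z_l, where G_l is the circulant matrix with first column
   win_prod g l.  With the unnormalised DFT F above, G_l = (1/N) F^* diag(F (win_prod g l)) F,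
   hence x_l = (1/N^2) F^* Sigma_l^{-1} F z_l with Sigma_l = diag(F (win_prod g l)). *)
definition LS_xl :: "complex vec \<Rightarrow> complex mat \<Rightarrow> nat \<Rightarrow> complex vec" where
  "LS_xl g Y l = (let N = dim_vec g; s = DFT (win_prod g l); fz = DFT (LS_z Y l) in
     (1 / (of_nat N)^2) \<cdot>\<^sub>v IDFT_adj (vec N (\<lambda>k. fz $ k / s $ k)))"

(* Step (3): the matrix X with diag(X,l) = x_l, i.e. X[i,(i+l) mod N] = x_l[i] *)
definition LS_matrix :: "complex vec \<Rightarrow> complex mat \<Rightarrow> complex mat" where
  "LS_matrix g Y = (let N = dim_vec g in
     mat N N (\<lambda>(i,j). LS_xl g Y (pidx N (int j - int i)) $ i))"

(* Step (4): lam is a largest eigenvalue (eigenvalue of maximal real part; the matrix is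
   Hermitian in the situation of interest so its eigenvalues are real) *)
definition largest_eigenvalue :: "complex mat \<Rightarrow> complex \<Rightarrow> bool" where
  "largest_eigenvalue M lam \<longleftrightarrow> eigenvalue M lam \<and> (\<forall>mu. eigenvalue M mu \<longrightarrow> Re mu \<le> Re lam)"

definition unit_vec :: "complex vec \<Rightarrow> bool" where
  "unit_vec u \<longleftrightarrow> (\<Sum>i<dim_vec u. (cmod (u $ i))^2) = 1"

definition LS_output :: "complex vec \<Rightarrow> complex mat \<Rightarrow> complex vec \<Rightarrow> bool" where
  "LS_output g Y xhat \<longleftrightarrow> (\<exists>lam u. largest_eigenvalue (LS_matrix g Y) lam \<and>
      eigenvector (LS_matrix g Y) u lam \<and> unit_vec u \<and> xhat = csqrt lam \<cdot>\<^sub>v u)"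

end

theory Submission
  imports Defs
begin

text \<open>For fixed \<open>m\<close>, the DFT in frequency of the spectrogram row \<open>k \<mapsto> |X[m,k]|\<^sup>2\<close> is, by
  the Wiener--Khinchin identity, \<open>N\<close> times the circular autocorrelation of \<open>n \<mapsto> x[n] g[m-n]\<close>.
  At lag \<open>\<ell>\<close> and as a function of \<open>m\<close>, this is \<open>N\<close> times the circular convolution of
  \<open>n \<mapsto> x[n] conj x[n+\<ell>]\<close> with the window product \<open>g[m] conj g[m-\<ell>]\<close>, whose DFT does not
  vanish; so step (2) deconvolves exactly, \<open>x\<^sub>\<ell>[i] = x[i] conj x[i+\<ell>]\<close>, and step (3)
  assembles the rank-one matrix \<open>x x\<^sup>*\<close>. Its largest eigenvalue is \<open>\<parallel>x\<parallel>\<^sup>2\<close> with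
  eigenvectors the nonzero multiples of \<open>x\<close>, hence \<open>\<parallel>x\<parallel> u\<close> is a unimodular multiple of \<open>x\<close>
  for every unit eigenvector \<open>u\<close>.\<close>

lemma omega_add: "omega N (a + b) = omega N a * omega N b"
proof -
  have "- 2 * pi * real_of_int (a + b) / real N
      = - 2 * pi * real_of_int a / real N + - 2 * pi * real_of_int b / real N"
    by (simp add: distrib_left add_divide_distrib diff_divide_distrib)
  thus ?thesis unfolding omega_def cis_mult by simp
qed

lemma cnj_omega: "cnj (omega N a) = omega N (- a)"
  unfolding omega_def by (simp add: cis_cnj)

lemma omega_power: "omega N (int k * t) = omega N t ^ k"
  unfolding omega_def by (simp add: DeMoivre algebra_simps)

lemma omega_multiple: "N > 0 \<Longrightarrow> omega N (int N * q) = 1"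
proof -
  assume N: "N > 0"
  have "omega N (int N * q) = cis (2 * pi * real_of_int (- q))"
    using N unfolding omega_def by (simp add: mult_ac)
  also have "\<dots> = 1"
    unfolding cis.ctr by (simp only: cos_int_2pin sin_int_2pin) (simp add: complex_eq_iff)
  finally show ?thesis .
qed

lemma omega_mod: "N > 0 \<Longrightarrow> omega N (a mod int N) = omega N a"
  by (metis omega_add omega_multiple mult.right_neutral mod_mult_div_eq mult.commute)

lemma dvd_of_omega_eq_1:
  assumes N: "N > 0" and "omega N t = 1"
  shows "int N dvd t"
proof -
  have "cos (- 2 * pi * real_of_int t / real N) = 1"
    using assms(2) unfolding omega_def by (metis cis.sel(1) one_complex.sel(1))
  then obtain n :: int where "- 2 * pi * real_of_int t / real N = real_of_int n * 2 * pi"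
    using cos_one_2pi_int by blast
  hence "pi * real_of_int (- t) = pi * real_of_int (n * int N)"
    using N by (simp add: field_simps)
  hence "real_of_int (- t) = real_of_int (n * int N)"
    using pi_neq_zero by (rule mult_left_cancel[THEN iffD1, rotated])
  hence "t = int N * - n" by (simp only: of_int_eq_iff) (simp add: algebra_simps)
  thus ?thesis by (rule dvdI)
qed

lemma sum_omega:
  assumes N: "N > 0"
  shows "(\<Sum>k<N. omega N (int k * t)) = (if int N dvd t then of_nat N else 0)"
proof (cases "int N dvd t")
  case True
  then obtain q where "t = int N * q" by blast
  hence "omega N (int k * t) = 1" for k
    using omega_multiple[OF N, of "int k * q"] by (simp add: algebra_simps)
  thus ?thesis using True by simp
next
  case False
  hence "omega N t \<noteq> 1" using dvd_of_omega_eq_1[OF N] by blast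
  moreover have "omega N t ^ N = 1"
    using omega_multiple[OF N, of t] by (simp add: omega_power[symmetric])
  ultimately show ?thesis using False by (simp add: omega_power geometric_sum)
qed

lemma sum_mult_dvd_indicator:
  fixes f :: "nat \<Rightarrow> complex"
  assumes N: "N > 0"
  shows "(\<Sum>n<N. f n * (if int N dvd (a - int n) then of_nat N else 0)) =
    f (pidx N a) * of_nat N"
proof -
  have "int N dvd (a - int n) \<longleftrightarrow> n = pidx N a" if "n < N" for n
    using N that unfolding pidx_def mod_eq_dvd_iff[symmetric] by auto
  hence "(\<Sum>n<N. f n * (if int N dvd (a - int n) then of_nat N else 0))
      = (\<Sum>n<N. if n = pidx N a then f n * of_nat N else 0)"
    by (intro sum.cong) auto
  also have "\<dots> = f (pidx N a) * of_nat N"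
    using N by (simp add: pidx_def nat_less_iff)
  finally show ?thesis .
qed

lemma pidx_less: "N > 0 \<Longrightarrow> pidx N a < N"
  unfolding pidx_def by (simp add: nat_less_iff)

lemma of_nat_pidx: "N > 0 \<Longrightarrow> int (pidx N a) = a mod int N"
  unfolding pidx_def by simp

lemma per_mod: "dim_vec v = N \<Longrightarrow> per v (a mod int N) = per v a"
  by (simp add: per_def pidx_def)

lemma per_cong: "dim_vec v = N \<Longrightarrow> a mod int N = b mod int N \<Longrightarrow> per v a = per v b"
  by (simp add: per_def pidx_def)

lemma per_of_nat: "n < dim_vec v \<Longrightarrow> per v (int n) = v $ n"
  by (simp add: per_def pidx_def)

lemma per_win_prod:
  assumes N: "N > 0" and dg: "dim_vec g = N"
  shows "per (win_prod g l) t = per g t * cnj (per g (t - int l))"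
proof -
  have "per (win_prod g l) t = g $ pidx N t * cnj (per g (int (pidx N t) - int l))"
    unfolding per_def win_prod_def using pidx_less[OF N] dg by simp
  also have "per g (int (pidx N t) - int l) = per g (t - int l)"
    by (rule per_cong[OF dg]) (simp add: of_nat_pidx[OF N] mod_diff_left_eq)
  finally show ?thesis unfolding per_def dg .
qed

lemma sum_periodic_shift:
  fixes h :: "int \<Rightarrow> 'a::comm_monoid_add"
  assumes N: "N > 0" and periodic: "\<And>a. h (a mod int N) = h a"
  shows "(\<Sum>m<N. h (int m - c)) = (\<Sum>m<N. h (int m))"
proof (rule sum.reindex_bij_witness[where j = "\<lambda>m. pidx N (int m - c)"
      and i = "\<lambda>m. pidx N (int m + c)"])
  fix m assume m: "m \<in> {..<N}"
  show "pidx N (int (pidx N (int m - c)) + c) = m" "pidx N (int m - c) \<in> {..<N}"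
    "h (int (pidx N (int m - c))) = h (int m - c)"
    using m N periodic by (auto simp: pidx_def nat_less_iff mod_add_left_eq)
next
  fix m assume m: "m \<in> {..<N}"
  show "pidx N (int (pidx N (int m + c)) - c) = m" "pidx N (int m + c) \<in> {..<N}"
    using m N by (auto simp: pidx_def nat_less_iff mod_diff_left_eq)
qed

lemma sum_circular_convolution_omega:
  fixes w :: "complex vec" and a :: "nat \<Rightarrow> complex"
  assumes N: "N > 0" and dw: "dim_vec w = N"
  shows "(\<Sum>m<N. (\<Sum>n<N. a n * per w (int m - int n)) * omega N (int k * int m)) =
     (\<Sum>n<N. a n * omega N (int k * int n)) * (\<Sum>j<N. w $ j * omega N (int k * int j))"
proof -
  define h where "h t = per w t * omega N (int k * t)" for t
  have periodic: "h (t mod int N) = h t" for t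
    unfolding h_def per_mod[OF dw] by (metis omega_mod[OF N] mod_mult_right_eq)
  have "(\<Sum>m<N. (\<Sum>n<N. a n * per w (int m - int n)) * omega N (int k * int m)) =
      (\<Sum>m<N. \<Sum>n<N. a n * omega N (int k * int n) * h (int m - int n))"
  proof (intro sum.cong refl, unfold sum_distrib_right, intro sum.cong refl)
    fix m n
    have "omega N (int k * int m) = omega N (int k * int n) * omega N (int k * (int m - int n))"
      unfolding omega_add[symmetric] by (simp add: algebra_simps)
    thus "a n * per w (int m - int n) * omega N (int k * int m) =
        a n * omega N (int k * int n) * h (int m - int n)"
      unfolding h_def by simp
  qed
  also have "\<dots> = (\<Sum>n<N. a n * omega N (int k * int n) * (\<Sum>m<N. h (int m - int n)))"
    by (subst sum.swap) (simp add: sum_distrib_left)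
  also have "\<dots> = (\<Sum>n<N. a n * omega N (int k * int n) * (\<Sum>m<N. h (int m)))"
    by (simp only: sum_periodic_shift[of N h, OF N periodic])
  also have "(\<Sum>m<N. h (int m)) = (\<Sum>j<N. w $ j * omega N (int k * int j))"
    unfolding h_def using dw by (intro sum.cong refl) (simp add: per_of_nat)
  finally show ?thesis by (simp add: sum_distrib_right)
qed

lemma sum_inverse_omega:
  fixes a :: "nat \<Rightarrow> complex"
  assumes N: "N > 0" and i: "i < N"
  shows "(\<Sum>k<N. (\<Sum>n<N. a n * omega N (int k * int n)) * cnj (omega N (int k * int i))) =
    of_nat N * a i"
proof -
  have "(\<Sum>k<N. (\<Sum>n<N. a n * omega N (int k * int n)) * cnj (omega N (int k * int i))) =
      (\<Sum>k<N. \<Sum>n<N. a n * omega N (int k * (int n - int i)))"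
  proof (intro sum.cong refl, unfold sum_distrib_right, intro sum.cong refl)
    fix k n
    have "omega N (int k * (int n - int i)) = omega N (int k * int n) * omega N (- (int k * int i))"
      unfolding omega_add[symmetric] by (simp add: algebra_simps)
    thus "a n * omega N (int k * int n) * cnj (omega N (int k * int i)) =
        a n * omega N (int k * (int n - int i))"
      by (simp add: cnj_omega)
  qed
  also have "\<dots> = (\<Sum>n<N. a n * (if int N dvd (int i - int n) then of_nat N else 0))"
    by (subst sum.swap) (simp add: sum_distrib_left[symmetric] sum_omega[OF N] dvd_diff_commute)
  also have "\<dots> = of_nat N * a i"
    using sum_mult_dvd_indicator[OF N] i by (simp add: pidx_def)
  finally show ?thesis .
qed

lemma sum_power_spectrum_omega:
  fixes c :: "nat \<Rightarrow> complex"
  assumes N: "N > 0"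
  defines "C k \<equiv> \<Sum>n<N. c n * omega N (int k * int n)"
  shows "(\<Sum>k<N. C k * cnj (C k) * omega N (int k * l)) =
    of_nat N * (\<Sum>n<N. c n * cnj (c (pidx N (int n + l))))"
proof -
  have "C k * cnj (C k) * omega N (int k * l) =
      (\<Sum>n<N. \<Sum>n'<N. c n * cnj (c n') * omega N (int k * (int n + l - int n')))" for k
  proof -
    have "c n * omega N (int k * int n) * cnj (c n' * omega N (int k * int n')) * omega N (int k * l)
        = c n * cnj (c n') * omega N (int k * (int n + l - int n'))" for n n'
    proof -
      have "omega N (int k * int n) * cnj (omega N (int k * int n')) * omega N (int k * l) =
          omega N (int k * (int n + l - int n'))"
        unfolding cnj_omega omega_add[symmetric] by (simp add: algebra_simps)
      moreover have "c n * omega N (int k * int n) * cnj (c n' * omega N (int k * int n')) *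
          omega N (int k * l) = c n * cnj (c n') *
          (omega N (int k * int n) * cnj (omega N (int k * int n')) * omega N (int k * l))"
        by (simp add: ac_simps)
      ultimately show ?thesis by simp
    qed
    thus ?thesis
      unfolding C_def cnj_sum sum_distrib_right sum_distrib_left
      by (subst sum.swap) (intro sum.cong refl)
  qed
  hence "(\<Sum>k<N. C k * cnj (C k) * omega N (int k * l)) =
      (\<Sum>k<N. \<Sum>n<N. \<Sum>n'<N. c n * cnj (c n') * omega N (int k * (int n + l - int n')))"
    by simp
  also have "\<dots> =
      (\<Sum>n<N. \<Sum>k<N. \<Sum>n'<N. c n * cnj (c n') * omega N (int k * (int n + l - int n')))"
    by (rule sum.swap)
  also have "\<dots> =
      (\<Sum>n<N. \<Sum>n'<N. c n * cnj (c n') * (\<Sum>k<N. omega N (int k * (int n + l - int n'))))"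
    by (rule sum.cong[OF refl]) (unfold sum_distrib_left, rule sum.swap)
  also have "\<dots> = (\<Sum>n<N. \<Sum>n'<N. c n * cnj (c n') *
      (if int N dvd (int n + l - int n') then of_nat N else 0))"
    unfolding sum_omega[OF N] ..
  also have "\<dots> = of_nat N * (\<Sum>n<N. c n * cnj (c (pidx N (int n + l))))"
    unfolding sum_mult_dvd_indicator[OF N] sum_distrib_left by (simp add: ac_simps)
  finally show ?thesis .
qed

definition spectrogram :: "complex vec \<Rightarrow> complex vec \<Rightarrow> complex mat" where
  "spectrogram g x = map_mat (\<lambda>c. of_real ((cmod c)^2)) (STFT g x)"

lemma LS_z_spectrogram:
  fixes g x :: "complex vec"
  assumes N: "N > 0" and dg: "dim_vec g = N" and dx: "dim_vec x = N" and m: "m < N"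
  shows "LS_z (spectrogram g x) l $ m =
    of_nat N * (\<Sum>n<N. x $ n * cnj (per x (int n + int l)) * per (win_prod g l) (int m - int n))"
proof -
  define c where "c n = x $ n * per g (int m - int n)" for n
  define C where "C k = (\<Sum>n<N. c n * omega N (int k * int n))" for k
  have autocorrelation: "c n * cnj (c (pidx N (int n + int l))) =
      x $ n * cnj (per x (int n + int l)) * per (win_prod g l) (int m - int n)" for n
  proof -
    have "x $ pidx N (int n + int l) = per x (int n + int l)"
      unfolding per_def dx ..
    moreover have "per g (int m - int (pidx N (int n + int l))) = per g (int m - int n - int l)"
      by (rule per_cong[OF dg]) (simp add: of_nat_pidx[OF N] mod_diff_right_eq diff_diff_eq)
    ultimately show ?thesis
      unfolding c_def per_win_prod[OF N dg] by (simp add: ac_simps)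
  qed
  have "LS_z (spectrogram g x) l $ m = (\<Sum>k<N. C k * cnj (C k) * omega N (int k * int l))"
    unfolding LS_z_def spectrogram_def STFT_def C_def c_def
    using m dx by (simp add: complex_norm_square del: of_real_power)
  also have "\<dots> = of_nat N * (\<Sum>n<N. c n * cnj (c (pidx N (int n + int l))))"
    unfolding C_def by (rule sum_power_spectrum_omega[OF N])
  also have "\<dots> =
      of_nat N * (\<Sum>n<N. x $ n * cnj (per x (int n + int l)) * per (win_prod g l) (int m - int n))"
    unfolding autocorrelation ..
  finally show ?thesis .
qed

lemma LS_xl_spectrogram:
  fixes g x :: "complex vec"
  assumes N: "N > 0" and dg: "dim_vec g = N" and dx: "dim_vec x = N"
    and nz: "\<forall>k<N. DFT (win_prod g l) $ k \<noteq> 0" and i: "i < N"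
  shows "LS_xl g (spectrogram g x) l $ i = x $ i * cnj (per x (int i + int l))"
proof -
  define Y where "Y = spectrogram g x"
  define a where "a n = x $ n * cnj (per x (int n + int l))" for n
  define A where "A k = (\<Sum>n<N. a n * omega N (int k * int n))" for k
  define w where "w = win_prod g l"
  have dw: "dim_vec w = N" unfolding w_def win_prod_def using dg by simp
  have dY: "dim_row Y = N" "dim_col Y = N"
    unfolding Y_def spectrogram_def STFT_def using dx by auto
  have "DFT (LS_z Y l) $ k = of_nat N * A k * DFT w $ k" if k: "k < N" for k
  proof -
    have "DFT (LS_z Y l) $ k = (\<Sum>m<N. LS_z Y l $ m * omega N (int k * int m))"
      unfolding DFT_def LS_z_def using dY k by simp
    also have "\<dots> =
        of_nat N * (\<Sum>m<N. (\<Sum>n<N. a n * per w (int m - int n)) * omega N (int k * int m))"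
      unfolding sum_distrib_left Y_def a_def w_def
      by (intro sum.cong refl) (simp add: LS_z_spectrogram[OF N dg dx] mult.assoc)
    also have "\<dots> = of_nat N * A k * DFT w $ k"
      unfolding A_def sum_circular_convolution_omega[OF N dw] DFT_def using dw k by simp
    finally show ?thesis .
  qed
  hence "vec N (\<lambda>k. DFT (LS_z Y l) $ k / DFT w $ k) $ k = of_nat N * A k" if "k < N" for k
    using that nz unfolding w_def by simp
  hence "LS_xl g Y l $ i =
      1 / (of_nat N)^2 * (\<Sum>k<N. of_nat N * A k * cnj (omega N (int k * int i)))"
    unfolding LS_xl_def Let_def IDFT_adj_def w_def using dg i by simp
  also have "\<dots> = 1 / (of_nat N)^2 * (of_nat N * (of_nat N * a i))"
    unfolding A_def mult.assoc sum_distrib_left[symmetric] sum_inverse_omega[OF N i] ..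
  also have "\<dots> = a i" using N by (simp add: power2_eq_square)
  finally show ?thesis unfolding Y_def a_def .
qed

definition outer_mat :: "complex vec \<Rightarrow> complex mat" where
  "outer_mat x = mat (dim_vec x) (dim_vec x) (\<lambda>(i, j). x $ i * cnj (x $ j))"

lemma LS_matrix_spectrogram:
  fixes g x :: "complex vec"
  assumes N: "N > 0" and dg: "dim_vec g = N" and dx: "dim_vec x = N"
    and nz: "\<forall>l<N. \<forall>k<N. DFT (win_prod g l) $ k \<noteq> 0"
  shows "LS_matrix g (spectrogram g x) = outer_mat x"
proof -
  have "LS_xl g (spectrogram g x) (pidx N (int j - int i)) $ i = x $ i * cnj (x $ j)"
    if i: "i < N" and j: "j < N" for i j
  proof -
    have "per x (int i + int (pidx N (int j - int i))) = per x (int j)"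
      by (rule per_cong[OF dx]) (simp add: of_nat_pidx[OF N] mod_add_right_eq)
    thus ?thesis
      using LS_xl_spectrogram[OF N dg dx _ i] nz pidx_less[OF N] per_of_nat[of j x] j dx by simp
  qed
  thus ?thesis
    unfolding LS_matrix_def outer_mat_def Let_def dg dx by (intro eq_matI) auto
qed

definition vec_sq_norm :: "complex vec \<Rightarrow> real" where
  "vec_sq_norm x = (\<Sum>i<dim_vec x. (cmod (x $ i))^2)"

lemma unit_vec_iff_vec_sq_norm: "unit_vec u \<longleftrightarrow> vec_sq_norm u = 1"
  unfolding unit_vec_def vec_sq_norm_def ..

lemma vec_sq_norm_nonneg: "vec_sq_norm x \<ge> 0"
  unfolding vec_sq_norm_def by (simp add: sum_nonneg)

lemma vec_sq_norm_eq_0_iff: "vec_sq_norm x = 0 \<longleftrightarrow> x = 0\<^sub>v (dim_vec x)"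
  unfolding vec_sq_norm_def
  by (auto simp: sum_nonneg_eq_0_iff intro!: eq_vecI) (metis index_zero_vec(1))

lemma vec_sq_norm_smult: "vec_sq_norm (a \<cdot>\<^sub>v x) = (cmod a)^2 * vec_sq_norm x"
  unfolding vec_sq_norm_def by (simp add: norm_mult power_mult_distrib sum_distrib_left)

lemma sum_cnj_mult_self: "(\<Sum>j<dim_vec x. cnj (x $ j) * x $ j) = of_real (vec_sq_norm x)"
  unfolding vec_sq_norm_def of_real_sum complex_norm_square by (simp add: mult.commute)

lemma outer_mat_mult_vec:
  assumes v: "v \<in> carrier_vec (dim_vec x)"
  shows "outer_mat x *\<^sub>v v = (\<Sum>j<dim_vec x. cnj (x $ j) * v $ j) \<cdot>\<^sub>v x"
proof (rule eq_vecI)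
  fix i assume "i < dim_vec ((\<Sum>j<dim_vec x. cnj (x $ j) * v $ j) \<cdot>\<^sub>v x)"
  thus "(outer_mat x *\<^sub>v v) $ i = ((\<Sum>j<dim_vec x. cnj (x $ j) * v $ j) \<cdot>\<^sub>v x) $ i"
    using v unfolding outer_mat_def
    by (simp add: scalar_prod_def lessThan_atLeast0 sum_distrib_left sum_distrib_right ac_simps)
qed (simp add: outer_mat_def)

lemma eigenvector_outer_mat_smult:
  assumes "x \<noteq> 0\<^sub>v (dim_vec x)" and "a \<noteq> 0"
  shows "eigenvector (outer_mat x) (a \<cdot>\<^sub>v x) (of_real (vec_sq_norm x))"
proof -
  have "(\<Sum>j<dim_vec x. cnj (x $ j) * (a \<cdot>\<^sub>v x) $ j) = a * of_real (vec_sq_norm x)"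
    unfolding sum_cnj_mult_self[symmetric] sum_distrib_left by (simp add: ac_simps)
  hence "outer_mat x *\<^sub>v (a \<cdot>\<^sub>v x) = of_real (vec_sq_norm x) \<cdot>\<^sub>v (a \<cdot>\<^sub>v x)"
    by (simp add: outer_mat_mult_vec smult_smult_assoc mult.commute)
  moreover have "a \<cdot>\<^sub>v x \<noteq> 0\<^sub>v (dim_vec x)"
  proof
    assume ax: "a \<cdot>\<^sub>v x = 0\<^sub>v (dim_vec x)"
    have "x $ i = 0" if "i < dim_vec x" for i
      using arg_cong[OF ax, of "\<lambda>v. v $ i"] that \<open>a \<noteq> 0\<close> by simp
    hence "x = 0\<^sub>v (dim_vec x)" by (intro eq_vecI) auto
    thus False using assms(1) by blast
  qed
  ultimately show ?thesis
    unfolding eigenvector_def by (simp add: outer_mat_def)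
qed

lemma nonzero_eigenvalue_outer_mat:
  assumes ev: "eigenvector (outer_mat x) u mu" and mu: "mu \<noteq> 0"
  shows "mu = of_real (vec_sq_norm x) \<and> (\<exists>c. u = c \<cdot>\<^sub>v x)"
proof -
  define c where "c = (\<Sum>j<dim_vec x. cnj (x $ j) * u $ j)"
  have u: "u \<in> carrier_vec (dim_vec x)" and u0: "u \<noteq> 0\<^sub>v (dim_vec x)"
    and eigen: "outer_mat x *\<^sub>v u = mu \<cdot>\<^sub>v u"
    using ev unfolding eigenvector_def outer_mat_def by auto
  from eigen have cx: "c \<cdot>\<^sub>v x = mu \<cdot>\<^sub>v u" unfolding c_def outer_mat_mult_vec[OF u] .
  have ui: "u $ i = c / mu * x $ i" if "i < dim_vec x" for i
    using arg_cong[OF cx, of "\<lambda>v. v $ i"] that u mu by (simp add: field_simps)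
  hence ux: "u = (c / mu) \<cdot>\<^sub>v x" using u by (intro eq_vecI) auto
  have "c = (\<Sum>j<dim_vec x. cnj (x $ j) * u $ j)" by (simp only: c_def)
  also have "\<dots> = c / mu * (\<Sum>j<dim_vec x. cnj (x $ j) * x $ j)"
    using ui by (simp add: sum_distrib_left ac_simps)
  finally have "c = c / mu * of_real (vec_sq_norm x)" unfolding sum_cnj_mult_self .
  moreover have "c \<noteq> 0" using u0 ux by auto
  ultimately have "mu = of_real (vec_sq_norm x)" using mu by (simp add: field_simps)
  with ux show ?thesis by blast
qed

lemma ex_unit_eigenvector_outer_mat:
  assumes n: "dim_vec x > 0"
  shows "\<exists>u. eigenvector (outer_mat x) u (of_real (vec_sq_norm x)) \<and> unit_vec u"
proof (cases "x = 0\<^sub>v (dim_vec x)")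
  case True
  define u :: "complex vec" where "u = Matrix.unit_vec (dim_vec x) 0"
  have u: "u \<in> carrier_vec (dim_vec x)" and "u $ 0 = 1" using n by (simp_all add: u_def)
  hence "u \<noteq> 0\<^sub>v (dim_vec x)" using n by auto
  moreover have "outer_mat x *\<^sub>v u = 0 \<cdot>\<^sub>v u"
    using u by (subst True) (auto simp: outer_mat_mult_vec)
  moreover have "(\<Sum>i<dim_vec x. (cmod (u $ i))^2) = (\<Sum>i<dim_vec x. if i = 0 then 1 else 0)"
    by (intro sum.cong) (auto simp: u_def)
  hence "(\<Sum>i<dim_vec x. (cmod (u $ i))^2) = 1" using n by simp
  ultimately show ?thesis
    using u True vec_sq_norm_eq_0_iff[of x]
    unfolding eigenvector_def unit_vec_def outer_mat_def by auto
next
  case False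
  define a where "a = complex_of_real (1 / sqrt (vec_sq_norm x))"
  have "vec_sq_norm x > 0"
    using False vec_sq_norm_nonneg vec_sq_norm_eq_0_iff by (metis less_eq_real_def)
  hence "a \<noteq> 0" and "vec_sq_norm (a \<cdot>\<^sub>v x) = 1"
    unfolding vec_sq_norm_smult a_def by (simp_all add: norm_divide power_divide)
  hence "eigenvector (outer_mat x) (a \<cdot>\<^sub>v x) (of_real (vec_sq_norm x)) \<and> unit_vec (a \<cdot>\<^sub>v x)"
    using eigenvector_outer_mat_smult[OF False] unfolding unit_vec_iff_vec_sq_norm by simp
  thus ?thesis ..
qed

lemma largest_eigenvalue_outer_mat_iff:
  assumes "dim_vec x > 0"
  shows "largest_eigenvalue (outer_mat x) lam \<longleftrightarrow> lam = of_real (vec_sq_norm x)"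
proof -
  have "eigenvalue (outer_mat x) (of_real (vec_sq_norm x))"
    using ex_unit_eigenvector_outer_mat[OF assms] unfolding eigenvalue_def by blast
  moreover have "mu = 0 \<or> mu = of_real (vec_sq_norm x)" if "eigenvalue (outer_mat x) mu" for mu
    using that nonzero_eigenvalue_outer_mat unfolding eigenvalue_def by blast
  ultimately show ?thesis
    using vec_sq_norm_nonneg[of x] unfolding largest_eigenvalue_def by force
qed

lemma csqrt_smult_unit_eigenvector_outer_mat:
  assumes ev: "eigenvector (outer_mat x) u (of_real (vec_sq_norm x))" and u: "unit_vec u"
  shows "\<exists>\<phi>. csqrt (of_real (vec_sq_norm x)) \<cdot>\<^sub>v u = cis \<phi> \<cdot>\<^sub>v x"
proof (cases "vec_sq_norm x = 0")
  case True
  hence "x $ i = 0" if "i < dim_vec x" for i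
    using vec_sq_norm_eq_0_iff[of x] that by (metis index_zero_vec(1))
  hence "csqrt (of_real (vec_sq_norm x)) \<cdot>\<^sub>v u = cis 0 \<cdot>\<^sub>v x"
    using ev True unfolding eigenvector_def outer_mat_def by (intro eq_vecI) auto
  thus ?thesis by blast
next
  case False
  then obtain c where ux: "u = c \<cdot>\<^sub>v x"
    using nonzero_eigenvalue_outer_mat[OF ev] by auto
  define t where "t = csqrt (of_real (vec_sq_norm x)) * c"
  have "(cmod t)^2 = vec_sq_norm u"
    unfolding t_def ux vec_sq_norm_smult norm_mult
    using vec_sq_norm_nonneg[of x] by (simp add: power_mult_distrib)
  hence "cmod t = 1"
    using u norm_ge_zero[of t] unfolding unit_vec_iff_vec_sq_norm
    by (auto simp: power2_eq_1_iff)
  moreover from this have "t \<noteq> 0" by auto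
  ultimately have "cis (Arg t) = t" using cis_Arg[of t] by (simp add: sgn_div_norm)
  moreover have "csqrt (of_real (vec_sq_norm x)) \<cdot>\<^sub>v u = t \<cdot>\<^sub>v x"
    unfolding ux t_def by (simp add: smult_smult_assoc)
  ultimately show ?thesis by (intro exI[of _ "Arg t"]) simp
qed

theorem theorem1:
  fixes N :: nat and g x :: "complex vec"
  assumes "N \<ge> 1"
    and "g \<in> carrier_vec N"
    and "\<forall>l<N. \<forall>k<N. DFT (win_prod g l) $ k \<noteq> 0"
    and "x \<in> carrier_vec N"
  shows "(\<exists>xhat. LS_output g (map_mat (\<lambda>c. of_real ((cmod c)^2)) (STFT g x)) xhat) \<and>
         (\<forall>xhat. LS_output g (map_mat (\<lambda>c. of_real ((cmod c)^2)) (STFT g x)) xhat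
           \<longrightarrow> (\<exists>\<phi>::real. xhat = cis \<phi> \<cdot>\<^sub>v x))"
proof -
  have N: "N > 0" and dg: "dim_vec g = N" and dx: "dim_vec x = N"
    using assms(1,2,4) by auto
  have matrix: "LS_matrix g (spectrogram g x) = outer_mat x"
    by (rule LS_matrix_spectrogram[OF N dg dx assms(3)])
  have out: "LS_output g (spectrogram g x) xhat \<longleftrightarrow>
      (\<exists>u. eigenvector (outer_mat x) u (of_real (vec_sq_norm x)) \<and> unit_vec u \<and>
        xhat = csqrt (of_real (vec_sq_norm x)) \<cdot>\<^sub>v u)" for xhat
    unfolding LS_output_def matrix largest_eigenvalue_outer_mat_iff[of x, unfolded dx, OF N] by auto
  have "\<exists>xhat. LS_output g (spectrogram g x) xhat"
    using ex_unit_eigenvector_outer_mat[of x] dx N unfolding out by auto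
  moreover have "\<exists>\<phi>. xhat = cis \<phi> \<cdot>\<^sub>v x" if "LS_output g (spectrogram g x) xhat" for xhat
    using that csqrt_smult_unit_eigenvector_outer_mat[of x] unfolding out by auto
  ultimately show ?thesis unfolding spectrogram_def[symmetric] by blast
qed

end
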